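(* Let $k\ge 2$ and $n\ge 1$ be integers, let $\bar{\mathcal{P}}=(\bar p_{i_1\dots i_k})\in\mathbb{R}^{[k,n]}$ be a columnwise-substochastic tensor, let $\mathbf{v}\in\mathbb{R}^n$ be a stochastic vector and let $\alpha\in[0,1)$. If the MLPPR system $(\mathbf{e}^T\mathbf{y})^{k-2}\mathbf{y}-\alpha\bar{\mathcal{P}}\mathbf{y}^{k-1}=\mathbf{v}$ has a nonnegative solution $\mathbf{y}_*\in\mathbb{R}^n_+$, then $\mathbf{y}_*$ belongs to the set $\Delta:=\{\mathbf{y}\in\mathbb{R}^n_+ : \mathbf{y}^T\mathbf{e}\le \varrho\}$, where $\varrho:=(1-\alpha)^{-\frac{1}{k-1}}$, and $\Delta$ is a bounded, closed and convex set.
   Context: $\mathbb{R}^{[k,n]}$ denotes the space of real tensors of order $k$ and dimension $n$ (indices $i_1,\dots,i_k\in\{1,\dots,n\}$). For $\mathcal{P}\in\mathbb{R}^{[k,n]}$ and $\mathbf{y}\in\mathbb{R}^n$, $\mathcal{P}\mathbf{y}^{k-1}\in\mathbb{R}^n$ is the vector with entries $(\mathcal{P}\mathbf{y}^{k-1})_i=\sum_{i_2,\dots,i_k=1}^n p_{i i_2\dots i_k}y_{i_2}\cdots y_{i_k}$. A tensor $\bar{\mathcal{P}}$ is columnwise-substochastic if all its entries are nonnegative and $\sum_{i=1}^n \bar p_{i i_2\dots i_k}\le 1$ for all $i_2,\dots,i_k$. $\mathbf{e}\in\mathbb{R}^n$ is the all-ones vector; a stochastic vector is a nonnegative vector whose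 entries sum to $1$. The MLPPR system is usually written $(I\circ\mathbf{e}^{\circ(k-2)}-\alpha\bar{\mathcal{P}})\mathbf{y}^{k-1}=\mathbf{v}$, where $I\circ\mathbf{e}^{\circ(k-2)}$ is the tensor with entries $\delta_{i_1i_2}$ (outer product of the identity matrix with $k-2$ copies of $\mathbf{e}$), so that $(I\circ\mathbf{e}^{\circ(k-2)})\mathbf{y}^{k-1}=(\mathbf{e}^T\mathbf{y})^{k-2}\mathbf{y}$. *)

theory Defs
  imports "HOL-Analysis.Analysis"
begin

text \<open>A tensor of order k and dimension n = CARD('n) is represented as a function
  P :: 'n => 'n list => real, where P i [i2,...,ik] is the entry p_{i i2 ... ik};
  only lists of length k-1 are relevant.\<close>

definition tindices :: "nat \<Rightarrow> 'n::finite list set" where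
  "tindices k = {js. length js = k - 1}"

definition tensor_apply :: "nat \<Rightarrow> ('n::finite \<Rightarrow> 'n list \<Rightarrow> real) \<Rightarrow> real^'n \<Rightarrow> real^'n" where
  "tensor_apply k P y = (\<chi> i. \<Sum>js\<in>tindices k. P i js * prod_list (map (\<lambda>j. y $ j) js))"

definition columnwise_substochastic :: "nat \<Rightarrow> ('n::finite \<Rightarrow> 'n list \<Rightarrow> real) \<Rightarrow> bool" where
  "columnwise_substochastic k P \<longleftrightarrow>
     (\<forall>i. \<forall>js\<in>tindices k. 0 \<le> P i js) \<and> (\<forall>js\<in>tindices k. (\<Sum>i\<in>UNIV. P i js) \<le> 1)"

definition stochastic_vec :: "real^'n::finite \<Rightarrow> bool" where
  "stochastic_vec v \<longleftrightarrow> (\<forall>i. 0 \<le> v $ i) \<and> (\<Sum>i\<in>UNIV. v $ i) = 1"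

definition nonneg_vec :: "real^'n::finite \<Rightarrow> bool" where
  "nonneg_vec y \<longleftrightarrow> (\<forall>i. 0 \<le> y $ i)"

definition rho :: "nat \<Rightarrow> real \<Rightarrow> real" where
  "rho k \<alpha> = (1 - \<alpha>) powr (- 1 / (real k - 1))"

definition Delta :: "nat \<Rightarrow> real \<Rightarrow> (real^'n::finite) set" where
  "Delta k \<alpha> = {y. nonneg_vec y \<and> (\<Sum>i\<in>UNIV. y $ i) \<le> rho k \<alpha>}"

end

theory Submission
  imports Defs
begin

text \<open>Let s be the sum of the entries of y. Summing the system over i and exchanging the
  sums, column substochasticity bounds the mass of the tensor term by the sum of
  y(i2) \<cdots> y(ik) over all index lists, which is s^(k-1). As v sums to 1, this gives
  (1 - \<alpha>) s^(k-1) \<le> 1, i.e. s \<le> \<rho>. The set \<Delta> is the nonnegative orthant cut by a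
  closed half-space, and on it the l1-norm bounds the Euclidean norm.\<close>

lemma sum_prod_list_lists_length:
  fixes f :: "'a \<Rightarrow> 'b::comm_semiring_1"
  shows "(\<Sum>xs | set xs \<subseteq> A \<and> length xs = n. prod_list (map f xs)) = sum f A ^ n"
proof (induction n)
  case 0
  have "{xs. set xs \<subseteq> A \<and> length xs = 0} = {[]}"
    by auto
  then show ?case by simp
next
  case (Suc n)
  let ?L = "{xs. set xs \<subseteq> A \<and> length xs = n}"
  have "(\<Sum>xs | set xs \<subseteq> A \<and> length xs = Suc n. prod_list (map f xs))
      = (\<Sum>(xs, x)\<in>?L \<times> A. f x * prod_list (map f xs))"
    unfolding lists_length_Suc_eq
    by (subst sum.reindex[OF inj_split_Cons]) (simp add: split_def)
  also have "\<dots> = (\<Sum>xs\<in>?L. \<Sum>x\<in>A. f x * prod_list (map f xs))"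
    by (simp add: sum.cartesian_product split_def)
  also have "\<dots> = sum f A * sum f A ^ n"
    by (simp add: sum_distrib_right[symmetric] sum_distrib_left[symmetric] Suc.IH mult.commute)
  finally show ?case by simp
qed

lemma sum_tensor_apply_le:
  assumes "columnwise_substochastic k P" and "nonneg_vec y"
  shows "(\<Sum>i\<in>UNIV. tensor_apply k P y $ i) \<le> (\<Sum>i\<in>UNIV. y $ i) ^ (k - 1)"
proof -
  let ?y = "\<lambda>js. prod_list (map (\<lambda>j. y $ j) js)"
  have "(\<Sum>i\<in>UNIV. tensor_apply k P y $ i) = (\<Sum>js\<in>tindices k. (\<Sum>i\<in>UNIV. P i js) * ?y js)"
    unfolding tensor_apply_def by (simp add: sum.swap[of _ UNIV] sum_distrib_right)
  also have "\<dots> \<le> (\<Sum>js\<in>tindices k. ?y js)"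
  proof (rule sum_mono)
    fix js :: "'a list"
    assume "js \<in> tindices k"
    then have "(\<Sum>i\<in>UNIV. P i js) \<le> 1"
      using assms(1) by (auto simp: columnwise_substochastic_def)
    moreover have "0 \<le> ?y js"
      using assms(2) by (intro prod_list_nonneg) (auto simp: nonneg_vec_def)
    ultimately show "(\<Sum>i\<in>UNIV. P i js) * ?y js \<le> ?y js"
      using mult_right_mono by fastforce
  qed
  also have "\<dots> = (\<Sum>i\<in>UNIV. y $ i) ^ (k - 1)"
    using sum_prod_list_lists_length[of "\<lambda>j. y $ j" "UNIV :: 'a set" "k - 1"]
    by (simp add: tindices_def)
  finally show ?thesis .
qed

lemma mlppr_solution_sum_pow_le:
  assumes "k \<ge> 2" and "columnwise_substochastic k P" and "stochastic_vec v"
    and "0 \<le> \<alpha>" and "nonneg_vec y"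
    and "\<forall>i. (\<Sum>j\<in>UNIV. y $ j) ^ (k - 2) * y $ i - \<alpha> * tensor_apply k P y $ i = v $ i"
  shows "(1 - \<alpha>) * (\<Sum>i\<in>UNIV. y $ i) ^ (k - 1) \<le> 1"
proof -
  define s where "s = (\<Sum>i\<in>UNIV. y $ i)"
  have "s ^ (k - 2) * s = s ^ (k - 1)"
    using assms(1) by (simp add: power_Suc2[symmetric] Suc_diff_Suc numeral_2_eq_2)
  then have "s ^ (k - 1) - \<alpha> * (\<Sum>i\<in>UNIV. tensor_apply k P y $ i)
      = (\<Sum>i\<in>UNIV. s ^ (k - 2) * y $ i - \<alpha> * tensor_apply k P y $ i)"
    by (simp add: s_def sum_subtractf sum_distrib_left)
  also have "\<dots> = (\<Sum>i\<in>UNIV. v $ i)"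
    using assms(6) by (simp add: s_def)
  also have "\<dots> = 1"
    using assms(3) by (simp add: stochastic_vec_def)
  finally have "s ^ (k - 1) - \<alpha> * (\<Sum>i\<in>UNIV. tensor_apply k P y $ i) = 1" .
  moreover have "\<alpha> * (\<Sum>i\<in>UNIV. tensor_apply k P y $ i) \<le> \<alpha> * s ^ (k - 1)"
    using sum_tensor_apply_le[OF assms(2,5)] assms(4) by (simp add: s_def mult_left_mono)
  ultimately show ?thesis
    by (simp add: s_def algebra_simps)
qed

lemma le_rho_if_pow_le:
  fixes s :: real
  assumes "k \<ge> 2" and "\<alpha> < 1" and "0 \<le> s" and "(1 - \<alpha>) * s ^ (k - 1) \<le> 1"
  shows "s \<le> rho k \<alpha>"
proof -
  have k: "real k - 1 > 0" and k': "real (k - 1) = real k - 1"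
    using assms(1) by (auto simp: of_nat_diff)
  have "s powr (real k - 1) = s ^ (k - 1)"
    using assms(1,3) powr_realpow'[of s "k - 1"] k' by simp
  also have "\<dots> \<le> (1 - \<alpha>) powr (-1)"
    using assms(2,4) by (simp add: powr_minus field_simps)
  finally have "s powr (real k - 1) \<le> (1 - \<alpha>) powr (-1)" .
  then have "(s powr (real k - 1)) powr (1 / (real k - 1))
      \<le> ((1 - \<alpha>) powr (-1)) powr (1 / (real k - 1))"
    using assms(3) k by (intro powr_mono2) auto
  moreover have "((1 - \<alpha>) powr (-1)) powr (1 / (real k - 1)) = rho k \<alpha>"
    unfolding rho_def powr_powr by simp
  ultimately show ?thesis
    using assms(3) k by (simp add: powr_powr)
qed

lemma Delta_eq_orthant_Int_halfspace:
  "Delta k \<alpha> = {x :: real^'n. \<forall>i. 0 \<le> x $ i} \<inter> {x. inner (vec 1) x \<le> rho k \<alpha>}"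
  by (auto simp: Delta_def nonneg_vec_def inner_vec_def)

lemma closed_Delta: "closed (Delta k \<alpha> :: (real^'n) set)"
  unfolding Delta_eq_orthant_Int_halfspace
  by (intro closed_Int closed_positive_orthant closed_halfspace_le)

lemma convex_Delta: "convex (Delta k \<alpha> :: (real^'n) set)"
  unfolding Delta_eq_orthant_Int_halfspace
  by (intro convex_Int convex_halfspace_le convex_box_cart) (simp add: atLeast_def[symmetric])

lemma bounded_Delta: "bounded (Delta k \<alpha> :: (real^'n) set)"
  unfolding bounded_iff
proof (intro exI ballI)
  fix x :: "real^'n"
  assume "x \<in> Delta k \<alpha>"
  then have "(\<Sum>i\<in>UNIV. \<bar>x $ i\<bar>) \<le> rho k \<alpha>"
    by (simp add: Delta_def nonneg_vec_def)
  then show "norm x \<le> rho k \<alpha>"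
    using norm_le_l1_cart[of x] by linarith
qed

theorem lemma3p4:
  fixes k :: nat and P :: "'n::finite \<Rightarrow> 'n list \<Rightarrow> real"
    and v y :: "real^'n" and \<alpha> :: real
  assumes "k \<ge> 2"
    and "columnwise_substochastic k P"
    and "stochastic_vec v"
    and "0 \<le> \<alpha>" and "\<alpha> < 1"
    and "nonneg_vec y"
    and "\<forall>i. (\<Sum>j\<in>UNIV. y $ j) ^ (k - 2) * y $ i - \<alpha> * tensor_apply k P y $ i = v $ i"
  shows "y \<in> Delta k \<alpha> \<and> bounded (Delta k \<alpha> :: (real^'n) set)
         \<and> closed (Delta k \<alpha> :: (real^'n) set) \<and> convex (Delta k \<alpha> :: (real^'n) set)"
proof -
  have "(1 - \<alpha>) * (\<Sum>i\<in>UNIV. y $ i) ^ (k - 1) \<le> 1"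
    using mlppr_solution_sum_pow_le[OF assms(1-4,6,7)] .
  moreover have "0 \<le> (\<Sum>i\<in>UNIV. y $ i)"
    using assms(6) by (simp add: nonneg_vec_def sum_nonneg)
  ultimately have "(\<Sum>i\<in>UNIV. y $ i) \<le> rho k \<alpha>"
    using le_rho_if_pow_le[OF assms(1,5)] by blast
  then have "y \<in> Delta k \<alpha>"
    using assms(6) by (simp add: Delta_def)
  then show ?thesis
    using bounded_Delta closed_Delta convex_Delta by blast
qed

end
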